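(* For every positive integer $n$: (a) $\displaystyle\sum_{k=1}^{n}N^p(k)\,\omega(n-k)=\tau(n)$; (b) $\displaystyle\sum_{k=1}^{n}(-1)^{n-k}N^q(k)\,o(n-k)=\tau^s(n)$.
   Context: $N^p(n)$ (resp. $N^q(n)$) is the total number of parts, summed over all partitions (resp. partitions into pairwise distinct parts) of $n$. $\omega(m)=1$ if $m=0$, $\omega(m)=(-1)^k$ if $m=\frac{3k^2\pm k}{2}$ for an integer $k\ge1$, and $\omega(m)=0$ otherwise. $o(m)$ is the number of partitions of $m$ into distinct odd parts, with $o(0)=1$. $\tau(m)$ is the number of positive divisors of $m$ and $\tau^s(m)=\sum_{d\mid m,\,d\ge1}(-1)^{m/d-1}$. *)

theory Defs
  imports Main "HOL-Library.Multiset"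
begin

definition partitions :: "nat \<Rightarrow> nat multiset set" where
  "partitions n = {M. (\<forall>x\<in>#M. 0 < x) \<and> sum_mset M = n}"

definition distinct_partitions :: "nat \<Rightarrow> nat set set" where
  "distinct_partitions n = {A. finite A \<and> (\<forall>x\<in>A. 0 < x) \<and> \<Sum>A = n}"

definition Np :: "nat \<Rightarrow> int" where
  "Np n = (\<Sum>M\<in>partitions n. int (size M))"

definition Nq :: "nat \<Rightarrow> int" where
  "Nq n = (\<Sum>A\<in>distinct_partitions n. int (card A))"

definition odp :: "nat \<Rightarrow> int" where
  "odp m = int (card {A. finite A \<and> (\<forall>x\<in>A. odd x) \<and> \<Sum>A = m})"

definition pent_omega :: "nat \<Rightarrow> int" where
  "pent_omega m =
     (if m = 0 then 1
      else if \<exists>k::nat. 1 \<le> k \<and> (2 * m = 3 * k^2 + k \<or> 2 * m = 3 * k^2 - k)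
      then (-1) ^ (THE k::nat. 1 \<le> k \<and> (2 * m = 3 * k^2 + k \<or> 2 * m = 3 * k^2 - k))
      else 0)"

definition tau :: "nat \<Rightarrow> int" where
  "tau m = int (card {d. 1 \<le> d \<and> d dvd m})"

definition tau_s :: "nat \<Rightarrow> int" where
  "tau_s m = (\<Sum>d | 1 \<le> d \<and> d dvd m. (-1) ^ (m div d - 1))"

end

theory Submission
  imports Defs "HOL-Computational_Algebra.Formal_Power_Series"
begin

text \<open>
  Both identities are coefficient comparisons of formal power series. Let P and Q be the
  generating functions of partitions and of partitions into distinct parts. By Euler's
  pentagonal number theorem the Euler product \<Prod>(1 - x^k) has the coefficients \<omega>(m); it is
  the inverse of P. By Euler's odd-distinct identity the inverse of Q is \<Prod>(1 - x^k) over odd k,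
  whose coefficients are (-1)^m o(m). It therefore suffices to show that the generating
  functions of N^p and N^q are T P and T' Q, where T and T' have the coefficients \<tau> and \<tau>^s.
  For N^p: the partitions of n in which the part k occurs at least r times correspond to the
  partitions of n - kr, and the pairs (k, r) with kr = j are counted by \<tau>(j). For N^q: deleting
  k maps the distinct partitions of n that contain k bijectively onto those of n - k that do not,
  so there are \<Sum>(-1)^(r-1) q(n - kr) of them, summed over r \<ge> 1, which regroups into \<tau>^s.
  The infinite products are never formed: up to degree N they agree with the products over k \<le> N.
\<close>

unbundle fps_syntax

section \<open>Euler's pentagonal number theorem\<close>

fun tri :: "nat \<Rightarrow> nat" where
  "tri 0 = 0"
| "tri (Suc k) = tri k + Suc k"

text \<open>\<^term>\<open>pent j\<close> is the pentagonal number j(3j - 1)/2, and \<^term>\<open>pent j + j\<close> = j(3j + 1)/2.\<close>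
definition pent :: "nat \<Rightarrow> nat" where
  "pent j = j * j + tri (j - 1)"

lemma two_tri: "2 * tri k = k * (k + 1)"
  by (induction k) auto

lemma tri_pos: "0 < k \<Longrightarrow> 0 < tri k"
  by (cases k) simp_all

lemma pent_Suc: "pent (Suc j) = pent j + 3 * j + 1"
  by (cases j) (simp_all add: pent_def)

lemma pent_ge: "j \<le> pent j"
  by (simp add: pent_def le_square trans_le_add1)

lemma pent_add_less_pent: "j < k \<Longrightarrow> pent j + j < pent k"
proof -
  assume "j < k"
  have "strict_mono pent"
    by (simp add: strict_mono_Suc_iff pent_Suc)
  then have "pent (Suc j) \<le> pent k"
    using \<open>j < k\<close> by (simp add: strict_mono_less_eq)
  then show ?thesis
    by (simp add: pent_Suc)
qed

lemma pentagonal_unique: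
  assumes "m \<in> {pent j, pent j + j}" and "m \<in> {pent k, pent k + k}"
  shows "j = k"
  using assms pent_add_less_pent[of j k] pent_add_less_pent[of k j]
  by (cases j k rule: linorder_cases) auto

lemma pentagonal_iff: "(2 * m = 3 * k^2 + k \<or> 2 * m = 3 * k^2 - k) \<longleftrightarrow> m \<in> {pent k, pent k + k}"
proof -
  have "3 * k^2 = 2 * pent k + k"
    using two_tri[of "k - 1"] by (cases k) (simp_all add: pent_def power2_eq_square algebra_simps)
  then show ?thesis
    by auto
qed

lemma pent_omega_pentagonal:
  assumes "0 < k" and "m \<in> {pent k, pent k + k}"
  shows "pent_omega m = (-1) ^ k"
proof -
  have "m \<noteq> 0"
    using assms pent_ge[of k] by auto
  have ex: "\<exists>j. 1 \<le> j \<and> m \<in> {pent j, pent j + j}"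
    using assms by (intro exI[of _ k]) simp
  have the: "(THE j. 1 \<le> j \<and> m \<in> {pent j, pent j + j}) = k"
  proof (rule the_equality)
    show "1 \<le> k \<and> m \<in> {pent k, pent k + k}"
      using assms by simp
  next
    fix j assume "1 \<le> j \<and> m \<in> {pent j, pent j + j}"
    then show "j = k"
      using assms(2) pentagonal_unique by blast
  qed
  show ?thesis
    unfolding pent_omega_def pentagonal_iff if_not_P[OF \<open>m \<noteq> 0\<close>] if_P[OF ex] the ..
qed

lemma pent_omega_non_pentagonal:
  assumes "m \<noteq> 0" and "\<And>k. m \<notin> {pent k, pent k + k}"
  shows "pent_omega m = 0"
proof -
  have "\<not> (\<exists>j. 1 \<le> j \<and> m \<in> {pent j, pent j + j})"
    using assms(2) by blast
  then show ?thesis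
    unfolding pent_omega_def pentagonal_iff if_not_P[OF \<open>m \<noteq> 0\<close>] by (simp only: if_False)
qed

lemma pentagonal_cases:
  obtains (zero) "m = 0"
    | (pentagonal) k where "0 < k" "m \<in> {pent k, pent k + k}"
    | (other) "m \<noteq> 0" "\<And>k. m \<notin> {pent k, pent k + k}"
proof (cases "\<exists>k. m \<in> {pent k, pent k + k}")
  case True
  then obtain k where k: "m \<in> {pent k, pent k + k}"
    by blast
  show thesis
  proof (cases "k = 0")
    case True
    with k show thesis
      using that(1) by (simp add: pent_def)
  next
    case False
    with k show thesis
      using that(2) by blast
  qed
qed (use that(3) in blast)

definition euler_prod :: "nat \<Rightarrow> 'a::comm_ring_1 fps" where
  "euler_prod n = (\<Prod>i=1..n. 1 - fps_X ^ i)"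

definition pentagonal_sum :: "nat \<Rightarrow> 'a::comm_ring_1 fps" where
  "pentagonal_sum n = 1 + (\<Sum>j=1..n. (-1) ^ j * (fps_X ^ pent j + fps_X ^ (pent j + j)))"

text \<open>Shanks' finite form of the pentagonal number theorem: the term k = 0 is
  \<^term>\<open>euler_prod n\<close>, all other terms are divisible by X^(n+1), and the sum telescopes
  in n to \<^term>\<open>pentagonal_sum n\<close>.\<close>
definition shanks_sum :: "nat \<Rightarrow> 'a::comm_ring_1 fps" where
  "shanks_sum n = (\<Sum>k\<le>n. (-1) ^ k * (\<Prod>i=Suc k..n. 1 - fps_X ^ i) * fps_X ^ (n * k + tri k))"

lemma shanks_sum_Suc:
  "shanks_sum (Suc n) =
     shanks_sum n + (-1) ^ Suc n * (fps_X ^ pent (Suc n) + fps_X ^ (pent (Suc n) + Suc n))"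
proof -
  define a :: "nat \<Rightarrow> 'a fps" where "a k = (-1) ^ k * (\<Prod>i=Suc k..n. 1 - fps_X ^ i)" for k
  define u where "u k = a k * fps_X ^ (Suc n * k + tri k)" for k
  define v where "v k = a k * fps_X ^ (Suc n * Suc k + tri k)" for k
  define w where "w k = a k * fps_X ^ (n * k + tri k)" for k
  have a_Suc: "a (Suc k) * (fps_X ^ Suc k - 1) = a k" if "k < n" for k
  proof -
    have split: "(\<Prod>i=Suc k..n. 1 - fps_X ^ i) = (1 - fps_X ^ Suc k) * (\<Prod>i=Suc (Suc k)..n. 1 - (fps_X::'a fps) ^ i)"
      using that by (simp add: prod.atLeast_Suc_atMost)
    show ?thesis
      unfolding a_def split by (simp add: algebra_simps)
  qed
  have "shanks_sum (Suc n) = (\<Sum>k\<le>n. u k - v k) + (-1) ^ Suc n * fps_X ^ (pent (Suc n) + Suc n)"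
    by (simp add: shanks_sum_def u_def v_def a_def prod.cl_ivl_Suc pent_def algebra_simps power_add)
  also have "(\<Sum>k\<le>n. u k - v k) = (\<Sum>k\<le>n. w k) + (\<Sum>k\<le>n. u k - w k) - (\<Sum>k\<le>n. v k)"
    by (simp add: sum_subtractf)
  also have "(\<Sum>k\<le>n. u k - w k) = (\<Sum>k<n. u (Suc k) - w (Suc k))"
    by (simp add: sum.atMost_shift u_def w_def add_ac del: power_Suc)
  also have "(\<Sum>k<n. u (Suc k) - w (Suc k)) = (\<Sum>k<n. v k)"
  proof (rule sum.cong)
    fix k assume "k \<in> {..<n}"
    have "u (Suc k) - w (Suc k) = a (Suc k) * (fps_X ^ Suc k - 1) * fps_X ^ (n * Suc k + tri (Suc k))"
      by (simp add: u_def w_def algebra_simps power_add)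
    also have "\<dots> = v k"
      using a_Suc \<open>k \<in> {..<n}\<close> by (simp add: v_def algebra_simps)
    finally show "u (Suc k) - w (Suc k) = v k" .
  qed simp
  finally show ?thesis
    by (simp add: shanks_sum_def w_def v_def a_def lessThan_Suc_atMost[symmetric] pent_def algebra_simps)
qed

lemma shanks_sum_eq_pentagonal_sum: "shanks_sum n = pentagonal_sum n"
proof (induction n)
  case 0
  show ?case by (simp add: shanks_sum_def pentagonal_sum_def)
next
  case (Suc n)
  then show ?case by (simp add: shanks_sum_Suc pentagonal_sum_def)
qed

lemma euler_prod_nth_eq_shanks_sum_nth:
  assumes "m \<le> n"
  shows "(euler_prod n :: 'a::comm_ring_1 fps) $ m = shanks_sum n $ m"
proof -
  have "(shanks_sum n :: 'a fps) $ m = (\<Sum>k\<le>n. if k = 0 then euler_prod n $ m else 0)"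
    unfolding shanks_sum_def fps_sum_nth
  proof (rule sum.cong[OF refl])
    fix k assume "k \<in> {..n}"
    show "((-1) ^ k * (\<Prod>i=Suc k..n. 1 - fps_X ^ i) * fps_X ^ (n * k + tri k)) $ m
        = (if k = 0 then euler_prod n $ m else (0::'a))"
    proof (cases "k = 0")
      case False
      have "n \<le> n * k" using False by simp
      then have "m < n * k + tri k" using assms tri_pos[of k] False by linarith
      with False show ?thesis by (simp add: fps_X_power_mult_right_nth)
    qed (simp add: euler_prod_def fps_X_power_mult_right_nth)
  qed
  then show ?thesis by simp
qed

lemma pentagonal_sum_nth:
  assumes "m \<le> n"
  shows "(pentagonal_sum n :: 'a::comm_ring_1 fps) $ m = of_int (pent_omega m)"
proof -
  define t :: "nat \<Rightarrow> 'a" where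
    "t j = (-1) ^ j * ((if m = pent j then 1 else 0) + (if m = pent j + j then 1 else 0))" for j
  have "(-1 :: 'a fps) ^ j = fps_const ((-1) ^ j)" for j
    by (metis fps_const_1_eq_1 fps_const_neg fps_const_power)
  then have nth: "pentagonal_sum n $ m = (if m = 0 then 1 else 0) + (\<Sum>j=1..n. t j)"
    by (simp add: pentagonal_sum_def fps_sum_nth t_def fps_X_power_nth)
  show ?thesis
  proof (cases rule: pentagonal_cases[of m])
    case zero
    have "t j = 0" if "j \<in> {1..n}" for j
      using that pent_ge[of j] zero by (simp add: t_def)
    then show ?thesis
      unfolding nth using zero by (simp add: pent_omega_def)
  next
    case (pentagonal k)
    have "t j = (if j = k then (-1) ^ k else 0)" for j
    proof (cases "j = k")
      case True
      then show ?thesis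
        using pentagonal by (auto simp: t_def)
    next
      case False
      then have "m \<noteq> pent j" "m \<noteq> pent j + j"
        using pentagonal(2) pentagonal_unique[of m j k] by auto
      then show ?thesis
        using False by (simp add: t_def)
    qed
    moreover have "k \<le> n"
      using pentagonal pent_ge[of k] assms by auto
    ultimately show ?thesis
      unfolding nth using pentagonal pent_ge[of k] by (auto simp: pent_omega_pentagonal)
  next
    case other
    have "t j = 0" for j
      using other(2)[of j] by (simp add: t_def)
    then show ?thesis
      unfolding nth using other by (simp add: pent_omega_non_pentagonal)
  qed
qed

theorem euler_prod_nth:
  "m \<le> n \<Longrightarrow> (euler_prod n :: 'a::comm_ring_1 fps) $ m = of_int (pent_omega m)"
  by (simp add: euler_prod_nth_eq_shanks_sum_nth shanks_sum_eq_pentagonal_sum pentagonal_sum_nth)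

section \<open>Partitions and the inverse of the Euler product\<close>

lemma member_le_sum_mset: "x \<in># M \<Longrightarrow> x \<le> sum_mset (M :: nat multiset)"
  by (induction M) auto

lemma size_le_sum_mset: "(\<And>x. x \<in># M \<Longrightarrow> 0 < x) \<Longrightarrow> size M \<le> sum_mset (M :: nat multiset)"
proof (induction M)
  case (add x M)
  then have "size M \<le> sum_mset M" and "0 < x"
    by auto
  then show ?case
    by simp
qed simp

lemma finite_partitions: "finite (partitions m)"
proof (rule finite_subset)
  show "partitions m \<subseteq> (\<Union>s\<le>m. multisets_of_size {1..m} s)"
    using member_le_sum_mset size_le_sum_mset
    by (fastforce simp: partitions_def multisets_of_size_def)
qed auto

definition partitions_le :: "nat \<Rightarrow> nat \<Rightarrow> nat multiset set" where
  "partitions_le N m = {M \<in> partitions m. \<forall>x\<in>#M. x \<le> N}"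

lemma partitions_le_eq_partitions: "m \<le> N \<Longrightarrow> partitions_le N m = partitions m"
  using member_le_sum_mset by (fastforce simp: partitions_le_def partitions_def)

lemma partitions_le_0: "partitions_le 0 m = (if m = 0 then {{#}} else {})"
proof -
  have "M \<in> partitions_le 0 m \<longleftrightarrow> M = {#} \<and> m = 0" for M
    by (cases M) (auto simp: partitions_le_def partitions_def)
  then show ?thesis
    by (auto simp: partitions_le_def partitions_def)
qed

lemma partitions_le_Suc:
  assumes "Suc N \<le> m"
  shows "partitions_le (Suc N) m
           = partitions_le N m \<union> add_mset (Suc N) ` partitions_le (Suc N) (m - Suc N)"
proof (intro equalityI subsetI)
  fix M assume M: "M \<in> partitions_le (Suc N) m"
  show "M \<in> partitions_le N m \<union> add_mset (Suc N) ` partitions_le (Suc N) (m - Suc N)"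
  proof (cases "Suc N \<in># M")
    case True
    then have "M = add_mset (Suc N) (M - {#Suc N#})" and "M - {#Suc N#} \<in> partitions_le (Suc N) (m - Suc N)"
      using M by (auto simp: partitions_le_def partitions_def sum_mset_diff dest: in_diffD)
    then show ?thesis by blast
  next
    case False
    then show ?thesis
      using M by (auto simp: partitions_le_def le_Suc_eq)
  qed
qed (use assms in \<open>auto simp: partitions_le_def partitions_def\<close>)

lemma card_partitions_le_Suc:
  "card (partitions_le (Suc N) m) =
     card (partitions_le N m) + (if Suc N \<le> m then card (partitions_le (Suc N) (m - Suc N)) else 0)"
proof (cases "Suc N \<le> m")
  case True
  have "partitions_le N m \<inter> add_mset (Suc N) ` partitions_le (Suc N) (m - Suc N) = {}"
    by (auto simp: partitions_le_def)
  moreover have "finite (partitions_le N' m')" for N' m'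
    using finite_partitions by (simp add: partitions_le_def)
  moreover have "inj_on (add_mset (Suc N)) A" for A
    by (simp add: inj_on_def)
  ultimately show ?thesis
    using True unfolding partitions_le_Suc[OF True] by (simp add: card_Un_disjoint card_image)
next
  case False
  then have "partitions_le (Suc N) m = partitions_le N m"
    using partitions_le_eq_partitions by simp
  then show ?thesis
    using False by simp
qed

definition partition_series :: "nat \<Rightarrow> 'a::comm_ring_1 fps" where
  "partition_series N = Abs_fps (\<lambda>m. of_nat (card (partitions_le N m)))"

lemma partition_series_0: "partition_series 0 = 1"
  by (rule fps_ext) (simp add: partition_series_def partitions_le_0)

lemma partition_series_Suc:
  "partition_series (Suc N) = partition_series N + fps_X ^ Suc N * partition_series (Suc N)"
proof (rule fps_ext)
  fix m
  show "partition_series (Suc N) $ m = (partition_series N + fps_X ^ Suc N * partition_series (Suc N)) $ m"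
    using card_partitions_le_Suc[of N m] by (simp add: partition_series_def fps_X_power_mult_nth del: power_Suc)
qed

lemma euler_prod_Suc: "euler_prod (Suc N) = euler_prod N * (1 - fps_X ^ Suc N)"
  by (simp add: euler_prod_def)

lemma euler_prod_mult_partition_series: "euler_prod N * (partition_series N :: 'a::comm_ring_1 fps) = 1"
proof (induction N)
  case 0
  show ?case by (simp add: euler_prod_def partition_series_0)
next
  case (Suc N)
  have step: "(1 - fps_X ^ Suc N) * partition_series (Suc N) = (partition_series N :: 'a fps)"
    using partition_series_Suc[of N] by (simp add: algebra_simps)
  show ?case
    by (simp only: euler_prod_Suc mult.assoc step Suc.IH)
qed

theorem partitions_pent_omega_convolution:
  "(\<Sum>i=0..m. int (card (partitions i)) * pent_omega (m - i)) = (if m = 0 then 1 else 0)"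
proof -
  have "(\<Sum>i=0..m. int (card (partitions i)) * pent_omega (m - i))
      = (partition_series m * euler_prod m) $ m"
    by (simp add: fps_mult_nth partition_series_def partitions_le_eq_partitions euler_prod_nth)
  also have "\<dots> = (1 :: int fps) $ m"
    by (subst mult.commute) (simp only: euler_prod_mult_partition_series)
  finally show ?thesis by simp
qed

section \<open>Distinct parts and distinct odd parts\<close>

lemma member_le_Sum: "finite A \<Longrightarrow> x \<in> A \<Longrightarrow> x \<le> \<Sum>(A :: nat set)"
  using member_le_sum[of x A "\<lambda>x. x"] by simp

lemma distinct_partitions_subset: "A \<in> distinct_partitions n \<Longrightarrow> A \<subseteq> {1..n}"
  using member_le_Sum[of A] by (auto simp: distinct_partitions_def Suc_le_eq)

lemma finite_distinct_partitions: "finite (distinct_partitions n)"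
  by (rule finite_subset[of _ "Pow {1..n}"]) (use distinct_partitions_subset in blast, simp)

lemma subsets_with_sum_eq_distinct_partitions:
  assumes "m \<le> N"
  shows "{A. A \<subseteq> {1..N} \<and> \<Sum>A = m} = distinct_partitions m"
proof (intro equalityI subsetI)
  fix A assume "A \<in> {A. A \<subseteq> {1..N} \<and> \<Sum>A = m}"
  then show "A \<in> distinct_partitions m"
    by (auto simp: distinct_partitions_def intro: finite_subset)
next
  fix A assume "A \<in> distinct_partitions m"
  then show "A \<in> {A. A \<subseteq> {1..N} \<and> \<Sum>A = m}"
    using distinct_partitions_subset[of A m] assms by (auto simp: distinct_partitions_def)
qed

lemma odd_subsets_with_sum_eq:
  fixes m N :: nat
  assumes "m \<le> N"
  shows "{A. A \<subseteq> {k \<in> {1..N}. odd k} \<and> \<Sum>A = m} = {A. finite A \<and> (\<forall>x\<in>A. odd x) \<and> \<Sum>A = m}"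
proof (intro equalityI subsetI)
  fix A assume A: "A \<in> {A. A \<subseteq> {k \<in> {1..N}. odd k} \<and> \<Sum>A = m}"
  then have "A \<subseteq> {1..N}"
    by auto
  then have "finite A"
    by (rule finite_subset) simp
  with A show "A \<in> {A. finite A \<and> (\<forall>x\<in>A. odd x) \<and> \<Sum>A = m}"
    by auto
next
  fix A assume A: "A \<in> {A. finite A \<and> (\<forall>x\<in>A. odd x) \<and> \<Sum>A = m}"
  then have "x \<le> N" if "x \<in> A" for x
    using that member_le_Sum[of A x] assms by simp
  with A show "A \<in> {A. A \<subseteq> {k \<in> {1..N}. odd k} \<and> \<Sum>A = m}"
    by (auto simp: Suc_le_eq odd_pos)
qed

lemma even_sum_odd_iff_even_card:
  "finite A \<Longrightarrow> (\<And>x. x \<in> A \<Longrightarrow> odd x) \<Longrightarrow> even (\<Sum>A :: nat) \<longleftrightarrow> even (card A)"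
  by (induction A rule: finite_induct) auto

lemma prod_one_plus_X_power_nth:
  fixes c :: "'a::comm_ring_1"
  assumes "finite S"
  shows "(\<Prod>k\<in>S. 1 + fps_const c * fps_X ^ k) $ m = (\<Sum>A | A \<subseteq> S \<and> \<Sum>A = m. c ^ card A)"
proof -
  have "(\<Prod>k\<in>S. 1 + fps_const c * fps_X ^ k) = (\<Sum>A\<in>Pow S. \<Prod>k\<in>A. fps_const c * fps_X ^ k)"
    using prod_add[OF assms, of "\<lambda>k. fps_const c * fps_X ^ k" "\<lambda>_. 1"] by (simp add: add.commute)
  also have "\<dots> = (\<Sum>A\<in>Pow S. fps_const (c ^ card A) * fps_X ^ (\<Sum>A))"
    by (simp add: prod.distrib power_sum)
  finally have "(\<Prod>k\<in>S. 1 + fps_const c * fps_X ^ k) $ m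
      = (\<Sum>A\<in>Pow S. if \<Sum>A = m then c ^ card A else 0)"
    by (auto simp: fps_sum_nth fps_X_power_nth intro!: sum.cong)
  also have "\<dots> = (\<Sum>A\<in>{A \<in> Pow S. \<Sum>A = m}. c ^ card A)"
    using assms by (intro sum.inter_filter[symmetric]) simp
  finally show ?thesis
    by simp
qed

lemma prod_one_minus_X_power_nth:
  assumes "finite S"
  shows "(\<Prod>k\<in>S. 1 - fps_X ^ k :: 'a::comm_ring_1 fps) $ m = (\<Sum>A | A \<subseteq> S \<and> \<Sum>A = m. (-1) ^ card A)"
  using prod_one_plus_X_power_nth[OF assms, of "-1" m] by (simp flip: fps_const_neg)

lemma prod_one_plus_X_power_nth_distinct:
  assumes "m \<le> N"
  shows "(\<Prod>k=1..N. 1 + fps_X ^ k :: 'a::comm_ring_1 fps) $ m = of_nat (card (distinct_partitions m))"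
  unfolding subsets_with_sum_eq_distinct_partitions[OF assms, symmetric]
  using prod_one_plus_X_power_nth[of "{1..N}" 1 m] by simp

lemma prod_odd_one_minus_X_power_nth:
  assumes "m \<le> N"
  shows "(\<Prod>k | k \<in> {1..N} \<and> odd k. 1 - fps_X ^ k :: 'a::comm_ring_1 fps) $ m = (-1) ^ m * of_int (odp m)"
proof -
  let ?S = "{k \<in> {1..N}. odd k}"
  have "(\<Prod>k\<in>?S. 1 - fps_X ^ k :: 'a fps) $ m = (\<Sum>A | A \<subseteq> ?S \<and> \<Sum>A = m. (-1) ^ card A)"
    by (rule prod_one_minus_X_power_nth) simp
  also have "\<dots> = (\<Sum>A | A \<subseteq> ?S \<and> \<Sum>A = m. (-1) ^ m)"
  proof (rule sum.cong[OF refl])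
    fix A assume "A \<in> {A. A \<subseteq> ?S \<and> \<Sum>A = m}"
    then have "finite A" "\<And>x. x \<in> A \<Longrightarrow> odd x" "\<Sum>A = m"
      by (auto intro: finite_subset)
    then show "(-1) ^ card A = ((-1) ^ m :: 'a)"
      using even_sum_odd_iff_even_card by (auto simp: minus_one_power_iff)
  qed
  finally show ?thesis
    unfolding odp_def odd_subsets_with_sum_eq[OF assms, symmetric] by (simp add: mult.commute)
qed

lemma prod_one_minus_X_power_nth_below:
  assumes "finite S" and "\<And>k. k \<in> S \<Longrightarrow> m < k"
  shows "(\<Prod>k\<in>S. 1 - fps_X ^ k :: 'a::comm_ring_1 fps) $ m = (if m = 0 then 1 else 0)"
proof -
  have empty: "A = {}" if "A \<subseteq> S" "\<Sum>A = m" for A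
  proof (rule ccontr)
    assume "A \<noteq> {}"
    then obtain x where "x \<in> A"
      by blast
    moreover have "finite A"
      using that(1) assms(1) by (rule finite_subset)
    ultimately have "x \<le> m"
      using member_le_Sum that(2) by blast
    with assms(2) \<open>x \<in> A\<close> that(1) show False
      by fastforce
  qed
  then have subsets: "{A. A \<subseteq> S \<and> \<Sum>A = m} = (if m = 0 then {{}} else {})"
    by (force dest: empty)
  have "(\<Prod>k\<in>S. 1 - fps_X ^ k :: 'a fps) $ m = (\<Sum>A | A \<subseteq> S \<and> \<Sum>A = m. (-1) ^ card A)"
    by (rule prod_one_minus_X_power_nth[OF assms(1)])
  also have "\<dots> = (if m = 0 then 1 else 0)"
    unfolding subsets by simp
  finally show ?thesis .
qed

lemma prod_one_plus_X_power_mult_euler_prod: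
  "(\<Prod>k=1..N. 1 + fps_X ^ k) * euler_prod N = (\<Prod>k=1..N. 1 - fps_X ^ (2 * k) :: 'a::comm_ring_1 fps)"
proof -
  have "(1 + fps_X ^ k) * (1 - fps_X ^ k) = (1 - fps_X ^ (2 * k) :: 'a fps)" for k
    unfolding mult_2 power_add by (simp add: algebra_simps)
  then show ?thesis
    by (simp add: euler_prod_def flip: prod.distrib)
qed

lemma euler_prod_double_odd_even:
  "euler_prod (2 * N) =
     (\<Prod>k | k \<in> {1..2 * N} \<and> odd k. 1 - fps_X ^ k) * (\<Prod>k=1..N. 1 - fps_X ^ (2 * k) :: 'a::comm_ring_1 fps)"
proof -
  have evens: "{k \<in> {1..2 * N}. even k} = (\<lambda>k. 2 * k) ` {1..N}"
    by (auto elim!: evenE)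
  have "euler_prod (2 * N) = (\<Prod>k | k \<in> {1..2 * N} \<and> odd k. 1 - fps_X ^ k) *
      (\<Prod>k\<in>{k \<in> {1..2 * N}. even k}. 1 - fps_X ^ k :: 'a fps)"
    unfolding euler_prod_def by (subst prod.union_disjoint[symmetric]) (auto intro: prod.cong)
  also have "(\<Prod>k\<in>{k \<in> {1..2 * N}. even k}. 1 - fps_X ^ k :: 'a fps) = (\<Prod>k=1..N. 1 - fps_X ^ (2 * k))"
    unfolding evens by (subst prod.reindex) (auto simp: inj_on_def)
  finally show ?thesis .
qed

lemma euler_prod_double:
  "euler_prod (2 * N) = euler_prod N * (\<Prod>k=Suc N..2 * N. 1 - fps_X ^ k :: 'a::comm_ring_1 fps)"
  unfolding euler_prod_def mult_2 using prod.ub_add_nat[of 1 N "\<lambda>k. 1 - fps_X ^ k" N] by simp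

lemma euler_prod_nonzero: "euler_prod N \<noteq> (0 :: 'a::idom fps)"
proof
  assume "euler_prod N = (0 :: 'a fps)"
  then have "euler_prod N $ 0 = (0 :: 'a)"
    by simp
  then show False
    using euler_prod_nth[where 'a='a, of 0 N] by (simp add: pent_omega_def)
qed

theorem prod_one_plus_X_power_mult_prod_odd:
  "(\<Prod>k=1..N. 1 + fps_X ^ k) * (\<Prod>k | k \<in> {1..2 * N} \<and> odd k. 1 - fps_X ^ k)
     = (\<Prod>k=Suc N..2 * N. 1 - fps_X ^ k :: 'a::idom fps)"
proof -
  let ?Q = "\<Prod>k=1..N. 1 + fps_X ^ k :: 'a fps"
  let ?O = "\<Prod>k | k \<in> {1..2 * N} \<and> odd k. 1 - fps_X ^ k :: 'a fps"
  let ?F = "\<Prod>k=Suc N..2 * N. 1 - fps_X ^ k :: 'a fps"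
  have "?Q * ?O * euler_prod N = ?O * (?Q * euler_prod N)"
    by (simp only: ac_simps)
  also have "\<dots> = euler_prod (2 * N)"
    by (simp only: prod_one_plus_X_power_mult_euler_prod euler_prod_double_odd_even)
  also have "\<dots> = ?F * euler_prod N"
    by (subst euler_prod_double) (rule mult.commute)
  finally show ?thesis
    by (rule mult_right_cancel[OF euler_prod_nonzero, THEN iffD1])
qed

theorem distinct_partitions_odp_convolution:
  "(\<Sum>i=0..m. int (card (distinct_partitions i)) * ((-1) ^ (m - i) * odp (m - i))) = (if m = 0 then 1 else 0)"
proof -
  have "(\<Sum>i=0..m. int (card (distinct_partitions i)) * ((-1) ^ (m - i) * odp (m - i)))
      = ((\<Prod>k=1..m. 1 + fps_X ^ k) * (\<Prod>k | k \<in> {1..2 * m} \<and> odd k. 1 - fps_X ^ k)) $ m"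
    unfolding fps_mult_nth
  proof (rule sum.cong[OF refl])
    fix i assume "i \<in> {0..m}"
    then have "i \<le> m" and "m - i \<le> 2 * m"
      by auto
    then show "int (card (distinct_partitions i)) * ((-1) ^ (m - i) * odp (m - i))
        = (\<Prod>k=1..m. 1 + fps_X ^ k) $ i * (\<Prod>k | k \<in> {1..2 * m} \<and> odd k. 1 - fps_X ^ k) $ (m - i)"
      using prod_one_plus_X_power_nth_distinct[where 'a=int] prod_odd_one_minus_X_power_nth[where 'a=int]
      by simp
  qed
  also have "\<dots> = (\<Prod>k=Suc m..2 * m. 1 - fps_X ^ k :: int fps) $ m"
    by (simp only: prod_one_plus_X_power_mult_prod_odd)
  also have "\<dots> = (if m = 0 then 1 else 0)"
    by (rule prod_one_minus_X_power_nth_below) auto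
  finally show ?thesis .
qed

section \<open>Counting parts through divisors\<close>

lemma sum_divisor_pairs:
  fixes g :: "nat \<Rightarrow> nat \<Rightarrow> 'a::comm_monoid_add"
  shows "(\<Sum>d=1..n. \<Sum>r=1..n div d. g d r) = (\<Sum>j=1..n. \<Sum>d | 1 \<le> d \<and> d dvd j. g d (j div d))"
proof -
  have divisors: "{d. 1 \<le> d \<and> d dvd j} = {d. d \<in> {1..n} \<and> d dvd j}" if "j \<in> {1..n}" for j
    using that by (auto dest: dvd_imp_le)
  have multiples: "{j. j \<in> {1..n} \<and> d dvd j} = (\<lambda>r. d * r) ` {1..n div d}" if "d \<in> {1..n}" for d
    using that by (auto simp: less_eq_div_iff_mult_less_eq mult.commute elim!: dvdE)
  have "(\<Sum>j=1..n. \<Sum>d | 1 \<le> d \<and> d dvd j. g d (j div d))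
      = (\<Sum>j=1..n. \<Sum>d | d \<in> {1..n} \<and> d dvd j. g d (j div d))"
    by (rule sum.cong[OF refl]) (simp only: divisors)
  also have "\<dots> = (\<Sum>d=1..n. \<Sum>j | j \<in> {1..n} \<and> d dvd j. g d (j div d))"
    by (rule sum.swap_restrict) simp_all
  also have "\<dots> = (\<Sum>d=1..n. \<Sum>r=1..n div d. g d r)"
  proof (rule sum.cong[OF refl])
    fix d assume d: "d \<in> {1..n}"
    show "(\<Sum>j | j \<in> {1..n} \<and> d dvd j. g d (j div d)) = (\<Sum>r=1..n div d. g d r)"
      unfolding multiples[OF d] using d by (simp add: sum.reindex inj_on_def)
  qed
  finally show ?thesis ..
qed

lemma sum_card_filter_swap:
  "finite A \<Longrightarrow> finite B \<Longrightarrow> (\<Sum>x\<in>A. card {y \<in> B. P x y}) = (\<Sum>y\<in>B. card {x \<in> A. P x y})"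
  using sum.swap_restrict[of A B "\<lambda>_ _. 1 :: nat" P] by simp

lemma partitions_with_multiplicity:
  assumes "0 < k" and "k * r \<le> n"
  shows "{M \<in> partitions n. r \<le> count M k} = (\<lambda>M. M + replicate_mset r k) ` partitions (n - k * r)"
proof (intro equalityI subsetI)
  fix M assume M: "M \<in> {M \<in> partitions n. r \<le> count M k}"
  then have sub: "replicate_mset r k \<subseteq># M"
    by (simp add: count_le_replicate_mset_subset_eq)
  then have "M - replicate_mset r k \<in> partitions (n - k * r)"
    using M by (auto simp: partitions_def sum_mset_diff mult.commute dest: in_diffD)
  moreover have "M = M - replicate_mset r k + replicate_mset r k"
    using sub by simp
  ultimately show "M \<in> (\<lambda>M. M + replicate_mset r k) ` partitions (n - k * r)"
    by blast
next
  fix M assume "M \<in> (\<lambda>M. M + replicate_mset r k) ` partitions (n - k * r)"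
  then show "M \<in> {M \<in> partitions n. r \<le> count M k}"
    using assms by (auto simp: partitions_def mult.commute split: if_splits)
qed

lemma card_partitions_with_multiplicity:
  assumes "0 < k" and "k * r \<le> n"
  shows "card {M \<in> partitions n. r \<le> count M k} = card (partitions (n - k * r))"
  unfolding partitions_with_multiplicity[OF assms] by (rule card_image) (simp add: inj_on_def)

lemma count_le_div:
  assumes "M \<in> partitions n" and "0 < k"
  shows "count M k \<le> n div k"
proof -
  have "replicate_mset (count M k) k \<subseteq># M"
    by (simp flip: count_le_replicate_mset_subset_eq)
  then have "sum_mset (replicate_mset (count M k) k) \<le> sum_mset M"
    by (metis le_add1 subset_mset.add_diff_inverse sum_mset.union)
  then show ?thesis
    using assms by (simp add: partitions_def less_eq_div_iff_mult_less_eq)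
qed

lemma sum_count_partitions:
  assumes "0 < k"
  shows "(\<Sum>M\<in>partitions n. count M k) = (\<Sum>r=1..n div k. card (partitions (n - k * r)))"
proof -
  have "(\<Sum>M\<in>partitions n. count M k) = (\<Sum>M\<in>partitions n. card {r \<in> {1..n div k}. r \<le> count M k})"
  proof (rule sum.cong[OF refl])
    fix M assume M: "M \<in> partitions n"
    have "{r \<in> {1..n div k}. r \<le> count M k} = {1..count M k}"
      using count_le_div[OF M assms] by auto
    then show "count M k = card {r \<in> {1..n div k}. r \<le> count M k}"
      by simp
  qed
  also have "\<dots> = (\<Sum>r=1..n div k. card {M \<in> partitions n. r \<le> count M k})"
    by (rule sum_card_filter_swap) (simp_all add: finite_partitions)
  also have "\<dots> = (\<Sum>r=1..n div k. card (partitions (n - k * r)))"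
    using assms by (intro sum.cong refl card_partitions_with_multiplicity)
      (simp_all add: less_eq_div_iff_mult_less_eq mult.commute)
  finally show ?thesis .
qed

lemma size_eq_sum_count:
  assumes "M \<in> partitions n"
  shows "size M = (\<Sum>k=1..n. count M k)"
proof -
  have "set_mset M \<subseteq> {1..n}"
  proof
    fix x assume "x \<in># M"
    then have "0 < x" and "x \<le> n"
      using assms member_le_sum_mset[of x M] by (auto simp: partitions_def)
    then show "x \<in> {1..n}"
      by simp
  qed
  then have "(\<Sum>k=1..n. count M k) = (\<Sum>k\<in>set_mset M. count M k)"
    by (intro sum.mono_neutral_right) (auto simp: not_in_iff)
  then show ?thesis
    by (simp add: size_multiset_overloaded_eq)
qed

theorem Np_eq_sum_tau: "Np n = (\<Sum>j=1..n. tau j * int (card (partitions (n - j))))"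
proof -
  have "(\<Sum>M\<in>partitions n. size M) = (\<Sum>M\<in>partitions n. \<Sum>k=1..n. count M k)"
    by (rule sum.cong[OF refl]) (rule size_eq_sum_count)
  also have "\<dots> = (\<Sum>k=1..n. \<Sum>M\<in>partitions n. count M k)"
    by (rule sum.swap)
  also have "\<dots> = (\<Sum>k=1..n. \<Sum>r=1..n div k. card (partitions (n - k * r)))"
    by (intro sum.cong refl sum_count_partitions) simp
  also have "\<dots> = (\<Sum>j=1..n. \<Sum>d | 1 \<le> d \<and> d dvd j. card (partitions (n - d * (j div d))))"
    by (rule sum_divisor_pairs)
  also have "\<dots> = (\<Sum>j=1..n. card {d. 1 \<le> d \<and> d dvd j} * card (partitions (n - j)))"
    by (intro sum.cong refl) simp
  finally have sizes: "(\<Sum>M\<in>partitions n. size M)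
      = (\<Sum>j=1..n. card {d. 1 \<le> d \<and> d dvd j} * card (partitions (n - j)))" .
  have "Np n = int (\<Sum>M\<in>partitions n. size M)"
    by (simp add: Np_def)
  also have "\<dots> = (\<Sum>j=1..n. tau j * int (card (partitions (n - j))))"
    unfolding sizes by (simp add: tau_def)
  finally show ?thesis .
qed

lemma distinct_partitions_containing:
  assumes "0 < k" and "k \<le> n"
  shows "{A \<in> distinct_partitions n. k \<in> A} = insert k ` {B \<in> distinct_partitions (n - k). k \<notin> B}"
proof (intro equalityI subsetI)
  fix A assume A: "A \<in> {A \<in> distinct_partitions n. k \<in> A}"
  then have "A - {k} \<in> {B \<in> distinct_partitions (n - k). k \<notin> B}"
    by (auto simp: distinct_partitions_def sum_diff1_nat)
  moreover have "A = insert k (A - {k})"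
    using A by auto
  ultimately show "A \<in> insert k ` {B \<in> distinct_partitions (n - k). k \<notin> B}"
    by blast
next
  fix A assume "A \<in> insert k ` {B \<in> distinct_partitions (n - k). k \<notin> B}"
  then obtain B where "A = insert k B" "B \<in> distinct_partitions (n - k)" "k \<notin> B"
    by blast
  then show "A \<in> {A \<in> distinct_partitions n. k \<in> A}"
    using assms by (auto simp: distinct_partitions_def)
qed

lemma card_distinct_partitions_containing_step:
  assumes "0 < k" and "k \<le> n"
  shows "card {A \<in> distinct_partitions n. k \<in> A} + card {B \<in> distinct_partitions (n - k). k \<in> B}
           = card (distinct_partitions (n - k))"
proof -
  have "card {A \<in> distinct_partitions n. k \<in> A} = card {B \<in> distinct_partitions (n - k). k \<notin> B}"
    unfolding distinct_partitions_containing[OF assms] by (rule card_image) (auto simp: inj_on_def)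
  moreover have "card (distinct_partitions (n - k))
      = card {B \<in> distinct_partitions (n - k). k \<notin> B} + card {B \<in> distinct_partitions (n - k). k \<in> B}"
    by (subst card_Un_disjoint[symmetric]) (auto simp: finite_distinct_partitions intro: arg_cong[where f=card])
  ultimately show ?thesis
    by simp
qed

lemma sum_alternating_Suc:
  fixes f :: "nat \<Rightarrow> 'a::comm_ring_1"
  shows "(\<Sum>r=1..Suc m. (-1) ^ (r - 1) * f r) = f 1 - (\<Sum>r=1..m. (-1) ^ (r - 1) * f (Suc r))"
proof -
  have "(\<Sum>r=1..Suc m. (-1) ^ (r - 1) * f r) = f 1 + (\<Sum>r=Suc 1..Suc m. (-1) ^ (r - 1) * f r)"
    by (subst sum.atLeast_Suc_atMost) simp_all
  also have "(\<Sum>r=Suc 1..Suc m. (-1) ^ (r - 1) * f r) = (\<Sum>r=1..m. (-1) ^ r * f (Suc r))"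
    by (subst sum.shift_bounds_cl_Suc_ivl) simp
  also have "\<dots> = - (\<Sum>r=1..m. (-1) ^ (r - 1) * f (Suc r))"
    by (subst sum_negf[symmetric], rule sum.cong) (auto simp: power_eq_if)
  finally show ?thesis
    by simp
qed

lemma card_distinct_partitions_containing:
  assumes "0 < k"
  shows "int (card {A \<in> distinct_partitions n. k \<in> A})
           = (\<Sum>r=1..n div k. (-1) ^ (r - 1) * int (card (distinct_partitions (n - k * r))))"
proof (induction n rule: less_induct)
  case (less n)
  define q where "q m = int (card (distinct_partitions m))" for m
  show ?case
  proof (cases "k \<le> n")
    case False
    have "k \<notin> A" if "A \<in> distinct_partitions n" for A
      using that False member_le_Sum[of A k] by (auto simp: distinct_partitions_def)
    then have none: "{A \<in> distinct_partitions n. k \<in> A} = {}"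
      by blast
    show ?thesis
      unfolding none using False by simp
  next
    case True
    have "int (card {A \<in> distinct_partitions n. k \<in> A})
        = q (n - k) - int (card {B \<in> distinct_partitions (n - k). k \<in> B})"
      using card_distinct_partitions_containing_step[OF assms True] by (simp add: q_def)
    moreover have "int (card {B \<in> distinct_partitions (n - k). k \<in> B})
        = (\<Sum>r=1..(n - k) div k. (-1) ^ (r - 1) * q (n - k - k * r))"
      using less.IH[of "n - k"] assms True by (simp add: q_def)
    ultimately have "int (card {A \<in> distinct_partitions n. k \<in> A})
        = q (n - k) - (\<Sum>r=1..(n - k) div k. (-1) ^ (r - 1) * q (n - k - k * r))"
      by simp
    also have "\<dots> = (\<Sum>r=1..Suc ((n - k) div k). (-1) ^ (r - 1) * q (n - k * r))"
      unfolding sum_alternating_Suc by (simp add: diff_diff_add)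
    also have "Suc ((n - k) div k) = n div k"
      using assms True by (simp add: le_div_geq)
    finally show ?thesis
      by (simp add: q_def)
  qed
qed

theorem Nq_eq_sum_tau_s: "Nq n = (\<Sum>j=1..n. tau_s j * int (card (distinct_partitions (n - j))))"
proof -
  let ?D = distinct_partitions
  have "(\<Sum>A\<in>?D n. card A) = (\<Sum>A\<in>?D n. card {k \<in> {1..n}. k \<in> A})"
  proof (rule sum.cong[OF refl])
    fix A assume "A \<in> ?D n"
    then have "{k \<in> {1..n}. k \<in> A} = A"
      using distinct_partitions_subset by blast
    then show "card A = card {k \<in> {1..n}. k \<in> A}"
      by simp
  qed
  also have "\<dots> = (\<Sum>k=1..n. card {A \<in> ?D n. k \<in> A})"
    by (rule sum_card_filter_swap) (simp_all add: finite_distinct_partitions)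
  finally have "Nq n = (\<Sum>k=1..n. int (card {A \<in> ?D n. k \<in> A}))"
    by (simp add: Nq_def flip: of_nat_sum)
  also have "\<dots> = (\<Sum>k=1..n. \<Sum>r=1..n div k. (-1) ^ (r - 1) * int (card (?D (n - k * r))))"
    by (intro sum.cong refl card_distinct_partitions_containing) simp
  also have "\<dots> = (\<Sum>j=1..n. \<Sum>d | 1 \<le> d \<and> d dvd j. (-1) ^ (j div d - 1) * int (card (?D (n - d * (j div d)))))"
    by (rule sum_divisor_pairs)
  also have "\<dots> = (\<Sum>j=1..n. tau_s j * int (card (?D (n - j))))"
    by (intro sum.cong refl) (simp add: tau_s_def sum_distrib_right)
  finally show ?thesis .
qed

lemma convolution_with_inverse:
  fixes a b t N :: "nat \<Rightarrow> 'a::comm_ring_1"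
  assumes inverse: "\<And>m. (\<Sum>i=0..m. a i * b (m - i)) = (if m = 0 then 1 else 0)"
    and N: "\<And>k. N k = (\<Sum>j=1..k. t j * a (k - j))"
    and "0 < n"
  shows "(\<Sum>k=1..n. N k * b (n - k)) = t n"
proof -
  define t' where "t' j = (if j = 0 then 0 else t j)" for j
  have "Abs_fps a * Abs_fps b = 1"
    by (rule fps_ext) (simp add: fps_mult_nth inverse)
  moreover have "Abs_fps N = Abs_fps t' * Abs_fps a"
  proof (rule fps_ext)
    fix k
    have "N k = (\<Sum>j=Suc 0..k. t' j * a (k - j))"
      by (simp add: N t'_def)
    also have "\<dots> = (\<Sum>j=0..k. t' j * a (k - j))"
      by (rule sum_shift_lb_Suc0_0) (simp add: t'_def)
    finally show "Abs_fps N $ k = (Abs_fps t' * Abs_fps a) $ k"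
      by (simp add: fps_mult_nth)
  qed
  ultimately have "Abs_fps N * Abs_fps b = Abs_fps t'"
    by (simp add: mult.assoc)
  then have "(Abs_fps N * Abs_fps b) $ n = t n"
    using \<open>0 < n\<close> by (simp add: t'_def)
  moreover have "(\<Sum>k=Suc 0..n. N k * b (n - k)) = (\<Sum>k=0..n. N k * b (n - k))"
    by (rule sum_shift_lb_Suc0_0) (simp add: N)
  ultimately show ?thesis
    by (simp add: fps_mult_nth)
qed

theorem corollary5:
  fixes n :: nat
  assumes "0 < n"
  shows "(\<Sum>k=1..n. Np k * pent_omega (n - k)) = tau n \<and>
         (\<Sum>k=1..n. (-1) ^ (n - k) * Nq k * odp (n - k)) = tau_s n"
proof
  show "(\<Sum>k=1..n. Np k * pent_omega (n - k)) = tau n"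
    using partitions_pent_omega_convolution Np_eq_sum_tau assms by (rule convolution_with_inverse)
  have "(\<Sum>k=1..n. Nq k * ((-1) ^ (n - k) * odp (n - k))) = tau_s n"
    using distinct_partitions_odp_convolution Nq_eq_sum_tau_s assms by (rule convolution_with_inverse)
  then show "(\<Sum>k=1..n. (-1) ^ (n - k) * Nq k * odp (n - k)) = tau_s n"
    by (simp add: ac_simps)
qed

end
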